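(* Let $F$ be the elementary cellular automaton with rule number 140. For every nonempty finite word $u\in\{0,1\}^*$, the deterministic communication complexity of $\textsc{SInv}_{F,u}$ restricted to inputs of length $n$ is bounded by a constant independent of $n$.
   Context: An elementary cellular automaton (ECA) with rule number $N\in\{0,\dots,255\}$ is the map $F:\{0,1\}^{\mathbb Z}\to\{0,1\}^{\mathbb Z}$ given by $F(x)_i=f(x_{i-1},x_i,x_{i+1})$. Here the local rule $f:\{0,1\}^3\to\{0,1\}$ is determined by $N=\sum_{a,b,c\in\{0,1\}}2^{4a+2b+c}f(a,b,c)$. For a nonempty finite word $u$, $p_u\in\{0,1\}^{\mathbb Z}$ is defined by $(p_u)_i=u_{i\bmod |u|}$. For a finite word $x$, $p_u[x]$ is the configuration equal to $x$ on positions $0,\dots,|x|-1$ and to $p_u$ elsewhere. $\textsc{SInv}_{F,u}$ is the decision problem: on input a finite word $x$, decide whether there is an integer $w$ such that for all $t\ge0$ the set of positions where $F^t(p_u)$ and $F^t(p_u[x])$ differ is contained in an interval of length $w$. For each $n$, it is regarded as a function $\{0,1\}^n\to\{0,1\}$. For a function $g:X\times Y\to Z$, $D(g)$ is the minimal depth of a deterministic two-party protocol computing $g$. In such a protocol, Alice knows $x$ and Bob knows $y$. The protocol is a binary tree: each internal node is labelled by a function of Alice's input only or of Bob's input only, with values in $\{\text{left},\text{right}\}$, and each leaf is labelled by an output value. For $g:\{0,1\}^m\to Z$, set $D(g)=\max_{0\le i<m}D(g_i)$, where $g_i:\{0,1\}^i\times\{0,1\}^{m-i}\to Z$ is $g_i(x,y)=g(xy)$.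 *)

theory Defs
  imports Main
begin

(* Configurations of {0,1}^Z, with 0/1 encoded as False/True. *)
type_synonym config = "int \<Rightarrow> bool"

definition eca_local :: "nat \<Rightarrow> bool \<Rightarrow> bool \<Rightarrow> bool \<Rightarrow> bool" where
  "eca_local N a b c = bit N (4 * of_bool a + 2 * of_bool b + of_bool c)"

definition eca :: "nat \<Rightarrow> config \<Rightarrow> config" where
  "eca N x = (\<lambda>i. eca_local N (x (i - 1)) (x i) (x (i + 1)))"

definition per :: "bool list \<Rightarrow> config" where
  "per u = (\<lambda>i. u ! nat (i mod int (length u)))"

definition patch :: "bool list \<Rightarrow> bool list \<Rightarrow> config" where
  "patch u x = (\<lambda>i. if 0 \<le> i \<and> i < int (length x) then x ! nat i else per u i)"

definition SInv :: "nat \<Rightarrow> bool list \<Rightarrow> bool list \<Rightarrow> bool" where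
  "SInv N u x = (\<exists>w::int. \<forall>t::nat. \<exists>a::int.
      {i. (eca N ^^ t) (per u) i \<noteq> (eca N ^^ t) (patch u x) i} \<subseteq> {a..a + w})"

datatype ('a, 'b, 'z) protocol =
    Leaf 'z
  | ANode "'a \<Rightarrow> bool" "('a, 'b, 'z) protocol" "('a, 'b, 'z) protocol"
  | BNode "'b \<Rightarrow> bool" "('a, 'b, 'z) protocol" "('a, 'b, 'z) protocol"

fun run :: "('a, 'b, 'z) protocol \<Rightarrow> 'a \<Rightarrow> 'b \<Rightarrow> 'z" where
  "run (Leaf z) x y = z"
| "run (ANode f l r) x y = (if f x then run l x y else run r x y)"
| "run (BNode f l r) x y = (if f y then run l x y else run r x y)"

fun depth :: "('a, 'b, 'z) protocol \<Rightarrow> nat" where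
  "depth (Leaf z) = 0"
| "depth (ANode f l r) = Suc (max (depth l) (depth r))"
| "depth (BNode f l r) = Suc (max (depth l) (depth r))"

definition CC :: "'a set \<Rightarrow> 'b set \<Rightarrow> ('a \<Rightarrow> 'b \<Rightarrow> 'z) \<Rightarrow> nat" where
  "CC X Y g = (LEAST d. \<exists>P :: ('a, 'b, 'z) protocol.
      depth P = d \<and> (\<forall>x\<in>X. \<forall>y\<in>Y. run P x y = g x y))"

definition words :: "nat \<Rightarrow> bool list set" where
  "words n = {x. length x = n}"

(* D(g) for g : {0,1}^m \<rightarrow> Z: max over splits i < m (convention 0 if m = 0) *)
definition CC_word :: "(bool list \<Rightarrow> 'z) \<Rightarrow> nat \<Rightarrow> nat" where
  "CC_word g m = Max (insert 0
      ((\<lambda>i. CC (words i) (words (m - i)) (\<lambda>x y. g (x @ y))) ` {..<m}))"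

end

theory Submission
  imports Defs
begin

(* Rule 140 acts by F(y)_i = y_i \<and> (\<not> y_(i-1) \<or> y_(i+1)): a cell can only switch from 1 to 0,
   so every 0 is a permanent wall, and the cells strictly between two walls evolve
   independently of the outside.
   If the period u contains a 0, the background p_u has walls arbitrarily far on both
   sides, so any finite perturbation stays confined between two fixed walls and
   SInv holds for every x.  If u = 1^k, then p_u is all ones and a fixed point; a
   perturbation containing a 0 erodes the ones to its left at speed one, so the
   difference region grows without bound, and SInv holds iff x has no 0.
   In both cases SInv(x @ y) = SInv x \<and> SInv y, and every predicate with this
   property is computed by the depth-2 protocol "Alice sends SInv x, Bob sends SInv y". *)

lemma eca140: "eca 140 y i = (y i \<and> (\<not> y (i - 1) \<or> y (i + 1)))"
  unfolding eca_def eca_local_def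
  by (cases "y i"; cases "y (i - 1)"; cases "y (i + 1)"; simp add: bit_iff_odd)

lemma eca140_iter_Suc:
  "(eca 140 ^^ Suc t) y i =
     ((eca 140 ^^ t) y i \<and> (\<not> (eca 140 ^^ t) y (i - 1) \<or> (eca 140 ^^ t) y (i + 1)))"
  by (simp only: funpow.simps comp_def eca140)

lemma eca140_decreasing: "(eca 140 ^^ t) y i \<Longrightarrow> y i"
  by (induction t arbitrary: i) (auto simp: eca140)

lemma eca140_walls_isolate:
  assumes agree: "\<forall>i. p \<le> i \<and> i \<le> q \<longrightarrow> y i = z i" and "\<not> y p" "\<not> y q"
  shows "\<forall>i. p \<le> i \<and> i \<le> q \<longrightarrow> (eca 140 ^^ t) y i = (eca 140 ^^ t) z i"
proof (induction t)
  case 0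
  then show ?case using agree by simp
next
  case (Suc t)
  show ?case
  proof (intro allI impI)
    fix i assume i: "p \<le> i \<and> i \<le> q"
    show "(eca 140 ^^ Suc t) y i = (eca 140 ^^ Suc t) z i"
    proof (cases "i = p \<or> i = q")
      case True
      then have "\<not> y i" "\<not> z i" using assms i by auto
      then show ?thesis using eca140_decreasing[of "Suc t" y] eca140_decreasing[of "Suc t" z]
        by blast
    next
      case False
      then have "p \<le> i - 1 \<and> i - 1 \<le> q" "p \<le> i + 1 \<and> i + 1 \<le> q" using i by auto
      then show ?thesis using Suc i by (simp only: eca140_iter_Suc)
    qed
  qed
qed

lemma eca140_confined:
  assumes agree: "\<forall>i. i \<le> p \<or> q \<le> i \<longrightarrow> y i = z i"
    and walls: "\<not> y p" "\<not> y q"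
    and left: "\<forall>i. \<exists>j\<le>i. \<not> y j" and right: "\<forall>i. \<exists>j\<ge>i. \<not> y j"
    and differ: "(eca 140 ^^ t) y i \<noteq> (eca 140 ^^ t) z i"
  shows "p \<le> i \<and> i \<le> q"
proof (rule ccontr)
  assume "\<not> (p \<le> i \<and> i \<le> q)"
  then consider "i < p" | "q < i" by linarith
  then show False
  proof cases
    case 1
    obtain j where "j \<le> i" "\<not> y j" using left by blast
    with 1 agree walls(1) have "\<forall>k. j \<le> k \<and> k \<le> p \<longrightarrow> (eca 140 ^^ t) y k = (eca 140 ^^ t) z k"
      by (intro eca140_walls_isolate) auto
    then show False using differ 1 \<open>j \<le> i\<close> by auto
  next
    case 2
    obtain j where "i \<le> j" "\<not> y j" using right by blast
    with 2 agree walls(2) have "\<forall>k. q \<le> k \<and> k \<le> j \<longrightarrow> (eca 140 ^^ t) y k = (eca 140 ^^ t) z k"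
      by (intro eca140_walls_isolate) auto
    then show False using differ 2 \<open>i \<le> j\<close> by auto
  qed
qed

lemma eca140_iter_ones: "(eca 140 ^^ t) (\<lambda>_. True) = (\<lambda>_. True)"
  by (induction t) (auto simp: eca140 fun_eq_iff)

lemma eca140_erosion:
  assumes ones: "\<forall>i. i < k \<longrightarrow> y i" and wall: "\<not> y k"
  shows "\<forall>i. i \<le> k \<longrightarrow> (eca 140 ^^ t) y i = (i < k - int t)"
proof (induction t)
  case 0
  then show ?case using assms by (auto simp: le_less)
next
  case (Suc t)
  show ?case
  proof (intro allI impI)
    fix i assume ik: "i \<le> k"
    show "(eca 140 ^^ Suc t) y i = (i < k - int (Suc t))"
    proof (cases "i = k")
      case True
      then show ?thesis using Suc by (simp only: eca140_iter_Suc) auto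
    next
      case False
      then have "(eca 140 ^^ t) y i = (i < k - int t)"
        "(eca 140 ^^ t) y (i - 1) = (i - 1 < k - int t)"
        "(eca 140 ^^ t) y (i + 1) = (i + 1 < k - int t)" using Suc ik by auto
      then show ?thesis by (simp only: eca140_iter_Suc) auto
    qed
  qed
qed

lemma per_periodic:
  assumes "0 \<le> k" "k < int (length u)"
  shows "per u (k + m * int (length u)) = u ! nat k"
  unfolding per_def using assms by simp

lemma per_zeros_unbounded:
  assumes "False \<in> set u"
  shows "\<exists>j\<le>i. \<not> per u j" and "\<exists>j\<ge>i. \<not> per u j"
proof -
  define L where "L = int (length u)"
  obtain k where k: "k < length u" "\<not> u ! k" using assms by (metis in_set_conv_nth)
  have zero: "\<And>m. \<not> per u (int k + m * L)"
    using per_periodic[of "int k" u] k unfolding L_def by auto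
  have L_pos: "L > 0" using k(1) unfolding L_def by linarith
  have "(i div L - 1) * L = i - i mod L - L"
    by (simp add: left_diff_distrib minus_mod_eq_div_mult)
  moreover have "0 \<le> i mod L" using L_pos by simp
  ultimately have "int k + (i div L - 1) * L \<le> i" using k(1) unfolding L_def by linarith
  then show "\<exists>j\<le>i. \<not> per u j" using zero by blast
  have "(i div L + 1) * L = i - i mod L + L"
    by (simp add: distrib_right minus_mod_eq_div_mult)
  moreover have "i mod L < L" using L_pos by simp
  ultimately have "i \<le> int k + (i div L + 1) * L" by linarith
  then show "\<exists>j\<ge>i. \<not> per u j" using zero by blast
qed

lemma per_all_ones:
  assumes "u \<noteq> []" "False \<notin> set u"
  shows "per u = (\<lambda>_. True)"
proof
  fix i
  have "nat (i mod int (length u)) < length u"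
    using assms(1) by (simp add: nat_less_iff)
  then show "per u i = True" unfolding per_def using assms(2) by (metis nth_mem)
qed

lemma patch_outside: "i < 0 \<or> int (length x) \<le> i \<Longrightarrow> patch u x i = per u i"
  unfolding patch_def by auto

text \<open>With a 0 in the period, every finite perturbation is confined between two walls.\<close>

lemma SInv_140_zero_in_period:
  assumes "False \<in> set u"
  shows "SInv 140 u x"
proof -
  obtain p where p: "p \<le> -1" "\<not> per u p" using per_zeros_unbounded(1)[OF assms] by blast
  obtain q where q: "q \<ge> int (length x)" "\<not> per u q"
    using per_zeros_unbounded(2)[OF assms] by blast
  have agree: "\<forall>i. i \<le> p \<or> q \<le> i \<longrightarrow> per u i = patch u x i"
    using p(1) q(1) patch_outside by auto
  have "i \<in> {p..q}" if "(eca 140 ^^ t) (per u) i \<noteq> (eca 140 ^^ t) (patch u x) i" for t i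
    using eca140_confined[OF agree p(2) q(2)] per_zeros_unbounded[OF assms] that by auto
  then have "{i. (eca 140 ^^ t) (per u) i \<noteq> (eca 140 ^^ t) (patch u x) i} \<subseteq> {p..q}"
    for t by blast
  then show ?thesis unfolding SInv_def by (intro exI[of _ "q - p"] allI exI[of _ p]) simp
qed

text \<open>Over the all-ones background, a perturbation containing a 0 spreads to the left
  at speed one, so no window of fixed width contains the differences.\<close>

lemma SInv_140_all_ones:
  assumes "u \<noteq> []" "False \<notin> set u"
  shows "SInv 140 u x \<longleftrightarrow> False \<notin> set x"
proof
  have bg: "per u = (\<lambda>_. True)" using per_all_ones[OF assms] .
  assume S: "SInv 140 u x"
  show "False \<notin> set x"
  proof
    assume "False \<in> set x"
    then have ex: "\<exists>k. k < length x \<and> \<not> x ! k" by (metis in_set_conv_nth)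
    define k where "k = (LEAST k. k < length x \<and> \<not> x ! k)"
    have k: "k < length x" "\<not> x ! k" using LeastI_ex[OF ex] unfolding k_def by blast+
    have before: "x ! j" if "j < k" for j
      using not_less_Least[of j "\<lambda>k. k < length x \<and> \<not> x ! k"] that k(1)
      unfolding k_def by auto
    define y where "y = patch u x"
    have "\<forall>i. i < int k \<longrightarrow> y i"
      unfolding y_def patch_def using bg k(1) before by (auto simp: nat_less_iff)
    moreover have "\<not> y (int k)" unfolding y_def patch_def using k by simp
    ultimately have eroded: "\<forall>i. i \<le> int k \<longrightarrow> (eca 140 ^^ t) y i = (i < int k - int t)" for t
      by (rule eca140_erosion)
    obtain w where w: "\<forall>t. \<exists>a. {i. (eca 140 ^^ t) (per u) i \<noteq> (eca 140 ^^ t) y i} \<subseteq> {a..a + w}"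
      using S unfolding SInv_def y_def by blast
    define t where "t = nat (int k + \<bar>w\<bar> + 2)"
    obtain a where a: "{i. (eca 140 ^^ t) (per u) i \<noteq> (eca 140 ^^ t) y i} \<subseteq> {a..a + w}"
      using w by blast
    have inside: "i \<in> {a..a + w}" if "int k - int t \<le> i" "i \<le> int k" for i
    proof -
      have "\<not> (eca 140 ^^ t) y i" using eroded[of t] that by simp
      then show ?thesis using a eca140_iter_ones[of t] bg by auto
    qed
    have t: "int k - int t = - \<bar>w\<bar> - 2" unfolding t_def by simp
    have "-1 \<in> {a..a + w}" "int k - int t \<in> {a..a + w}" using inside t by simp_all
    then show False using t abs_ge_self[of w] by simp
  qed
next
  assume x_ones: "False \<notin> set x"
  have "patch u x i" for i
  proof (cases "0 \<le> i \<and> i < int (length x)")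
    case True
    then have "x ! nat i \<in> set x" by (simp add: nat_less_iff)
    then have "x ! nat i" using x_ones by (metis (full_types))
    then show ?thesis using True unfolding patch_def by simp
  next
    case False
    then show ?thesis using per_all_ones[OF assms] patch_outside[of i x u] by auto
  qed
  then have "patch u x = per u" using per_all_ones[OF assms] by auto
  then show "SInv 140 u x" unfolding SInv_def by auto
qed

theorem SInv_140_iff:
  assumes "u \<noteq> []"
  shows "SInv 140 u x \<longleftrightarrow> False \<in> set u \<or> False \<notin> set x"
  using SInv_140_zero_in_period SInv_140_all_ones[OF assms] by blast

lemma CC_le_depth:
  assumes "\<forall>x\<in>X. \<forall>y\<in>Y. run P x y = g x y"
  shows "CC X Y g \<le> depth P"
  unfolding CC_def by (rule Least_le) (use assms in blast)

lemma CC_word_le: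
  assumes "\<And>i. i < m \<Longrightarrow> CC (words i) (words (m - i)) (\<lambda>x y. g (x @ y)) \<le> C"
  shows "CC_word g m \<le> C"
  unfolding CC_word_def using assms by (subst Max_le_iff) auto

lemma CC_word_conj_split:
  assumes split: "\<And>x y. g (x @ y) = (g x \<and> g y)"
  shows "CC_word g m \<le> 2"
proof (rule CC_word_le)
  fix i
  let ?P = "ANode g (BNode g (Leaf True) (Leaf False)) (Leaf False)
              :: (bool list, bool list, bool) protocol"
  have "CC (words i) (words (m - i)) (\<lambda>x y. g (x @ y)) \<le> depth ?P"
    by (rule CC_le_depth) (simp add: split)
  then show "CC (words i) (words (m - i)) (\<lambda>x y. g (x @ y)) \<le> 2"
    by (simp add: numeral_2_eq_2)
qed

theorem mainTheorem8:
  shows "\<forall>u::bool list. u \<noteq> [] \<longrightarrow> (\<exists>C::nat. \<forall>n. CC_word (SInv 140 u) n \<le> C)"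
proof (intro allI impI)
  fix u :: "bool list" assume "u \<noteq> []"
  then have "\<And>x y. SInv 140 u (x @ y) = (SInv 140 u x \<and> SInv 140 u y)"
    by (auto simp: SInv_140_iff)
  then have "\<forall>n. CC_word (SInv 140 u) n \<le> 2" using CC_word_conj_split by blast
  then show "\<exists>C::nat. \<forall>n. CC_word (SInv 140 u) n \<le> C" by blast
qed

end
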